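(* Let $\phi$ be an instance of \textsc{Max (2,3)-SAT} with $n$ variables and let $T_\phi$ be the tournament instance constructed from $\phi$ as described in the context. If $T_\phi$ has a seeding whose tournament value is at least $k'$, then $\phi$ admits an assignment that satisfies at least $k'-n$ clauses.
   Context: Tournament model: players form a finite set of size $2^{n'}$ totally ordered by strength (stronger beats weaker). A seeding is a bijection $\sigma$ from players to $[2^{n'}]$. In round $r=1,\dots,n'$, for each block of seed positions $\{(k-1)2^r+1,\dots,k2^r\}$, the winner $a$ of its first half $\{(k-1)2^r+1,\dots,(k-1)2^r+2^{r-1}\}$ plays the winner $b$ of its second half (a single-position block is won by the player seeded there), the stronger one wins the block, and the game has value $v(a,b,r)$. The tournament value is the sum of values of all games played. \textsc{Max (2,3)-SAT} instance: a CNF formula $\phi$ with variables $x_1,\dots,x_n$ and clauses $c_1,\dots,c_m$, each clause having exactly two literals and each variable appearing in at most three clauses; the occurrences of each variable $x$ as a literal are numbered $1,2,3$ (its $j$th appearance) in a fixed order. Construction of $T_\phi$: let $n'$ be the smallest integer with $16n\le 2^{n'}$ and $p=2^{n'}-16n$. Players: for each variable $x$, three variable players $x,x^T,x^F$; for each clause $c$, one clause player $c$; and dummy players $f_1,\dots,f_{13n+p-m}$. Strength order (strongest first): $x_1>x_1^T>x_1^F>x_2>x_2^T>x_2^F>\dots>x_n>x_n^T>x_n^F>c_1>\dots>c_m>f_1>\dots>f_{13n+p-m}$. Game values: for each variable $x$, $v(x,x^T,1)=v(x^T,x,1)=v(x,x^F,1)=v(x^F,x,1)=1$; for each clause $c$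 and each literal of $c$ that is the $j$th appearance of variable $x$, if $x$ appears non-negated there set $v(c,x^T,j)=v(x^T,c,j)=1$, and otherwise set $v(c,x^F,j)=v(x^F,c,j)=1$; all other values $v(a,b,r)$ for $r\in[n']$ are $0$. *)

theory Defs
  imports Main
begin

text \<open>A literal is a pair (variable index, polarity); polarity True means non-negated.  The occurrence numbering is given by
  occ i p = j, meaning the literal at position p (0 = first, 1 = second) of
  clause i is the j-th appearance of its variable.\<close>

type_synonym literal = "nat \<times> bool"
type_synonym clause = "literal \<times> literal"

definition lit :: "clause list \<Rightarrow> nat \<Rightarrow> nat \<Rightarrow> literal" where
  "lit cls i p = (if p = 0 then fst (cls ! i) else snd (cls ! i))"

definition occurrences :: "clause list \<Rightarrow> nat \<Rightarrow> (nat \<times> nat) set" where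
  "occurrences cls x = {(i, p). i < length cls \<and> p < 2 \<and> fst (lit cls i p) = x}"

definition max23_instance :: "nat \<Rightarrow> clause list \<Rightarrow> (nat \<Rightarrow> nat \<Rightarrow> nat) \<Rightarrow> bool" where
  "max23_instance n cls occ \<longleftrightarrow>
     (\<forall>i<length cls. \<forall>p<2. fst (lit cls i p) < n) \<and>
     (\<forall>x<n. card (occurrences cls x) \<le> 3) \<and>
     (\<forall>x<n. bij_betw (\<lambda>(i, p). occ i p) (occurrences cls x) {1..card (occurrences cls x)})"

definition lit_true :: "(nat \<Rightarrow> bool) \<Rightarrow> literal \<Rightarrow> bool" where
  "lit_true a l = (a (fst l) = snd l)"

definition num_satisfied :: "clause list \<Rightarrow> (nat \<Rightarrow> bool) \<Rightarrow> nat" where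
  "num_satisfied cls a = card {i. i < length cls \<and> (lit_true a (fst (cls ! i)) \<or> lit_true a (snd (cls ! i)))}"

datatype player = Var nat | VarT nat | VarF nat | Cl nat | Dummy nat

definition rounds :: "nat \<Rightarrow> nat" where
  "rounds n = (LEAST n'. 16 * n \<le> 2 ^ n')"

definition padding :: "nat \<Rightarrow> nat" where
  "padding n = 2 ^ rounds n - 16 * n"

definition players :: "nat \<Rightarrow> nat \<Rightarrow> player set" where
  "players n m =
     {Var x | x. x < n} \<union> {VarT x | x. x < n} \<union> {VarF x | x. x < n} \<union>
     {Cl c | c. c < m} \<union> {Dummy f | f. f < 13 * n + padding n - m}"

text \<open>Strength rank: smaller rank = stronger.  Order
  x_0 > x_0^T > x_0^F > x_1 > ... > x_{n-1}^F > c_0 > ... > c_{m-1} > f_0 > ...\<close>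
fun rank :: "nat \<Rightarrow> nat \<Rightarrow> player \<Rightarrow> nat" where
  "rank n m (Var x) = 3 * x"
| "rank n m (VarT x) = 3 * x + 1"
| "rank n m (VarF x) = 3 * x + 2"
| "rank n m (Cl c) = 3 * n + c"
| "rank n m (Dummy f) = 3 * n + m + f"

definition stronger_of :: "(player \<Rightarrow> nat) \<Rightarrow> player \<Rightarrow> player \<Rightarrow> player" where
  "stronger_of rk a b = (if rk a < rk b then a else b)"

definition value_edge :: "clause list \<Rightarrow> (nat \<Rightarrow> nat \<Rightarrow> nat) \<Rightarrow> player \<Rightarrow> player \<Rightarrow> nat \<Rightarrow> bool" where
  "value_edge cls occ a b r \<longleftrightarrow>
     (\<exists>x. r = 1 \<and> a = Var x \<and> (b = VarT x \<or> b = VarF x)) \<or>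
     (\<exists>c p. c < length cls \<and> p < 2 \<and> a = Cl c \<and> r = occ c p \<and>
        b = (if snd (lit cls c p) then VarT (fst (lit cls c p)) else VarF (fst (lit cls c p))))"

definition game_value :: "clause list \<Rightarrow> (nat \<Rightarrow> nat \<Rightarrow> nat) \<Rightarrow> player \<Rightarrow> player \<Rightarrow> nat \<Rightarrow> nat" where
  "game_value cls occ a b r =
     (if value_edge cls occ a b r \<or> value_edge cls occ b a r then 1 else 0)"

text \<open>Winner of block k (k >= 1) of seed positions {(k-1)2^r+1 .. k 2^r};
  seat q is the player seeded at position q.\<close>
fun winner :: "(player \<Rightarrow> nat) \<Rightarrow> (nat \<Rightarrow> player) \<Rightarrow> nat \<Rightarrow> nat \<Rightarrow> player" where
  "winner rk seat 0 k = seat k"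
| "winner rk seat (Suc r) k =
     stronger_of rk (winner rk seat r (2 * k - 1)) (winner rk seat r (2 * k))"

definition tournament_value :: "nat \<Rightarrow> clause list \<Rightarrow> (nat \<Rightarrow> nat \<Rightarrow> nat) \<Rightarrow> (player \<Rightarrow> nat) \<Rightarrow> nat" where
  "tournament_value n cls occ \<sigma> =
     (let n' = rounds n; m = length cls; rk = rank n m;
          seat = inv_into (players n m) \<sigma> in
      \<Sum>r\<in>{1..n'}. \<Sum>k\<in>{1..2 ^ (n' - r)}.
         game_value cls occ (winner rk seat (r - 1) (2 * k - 1)) (winner rk seat (r - 1) (2 * k)) r)"

end

theory Submission
  imports Defs
begin

text \<open>Only two kinds of games carry value: the round-1 game of a variable player x against
  x^T or x^F, and the game of a clause player c against the literal player of one of its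
  literals, in the round given by that literal's occurrence number.  The literal player is the
  stronger one, so c loses every valued game it plays; since a loser never plays again, each
  clause has at most one valued game.  The literal players of x play at most one valued game
  per occurrence of x, so at most three, and if x has a valued round-1 game, its loser plays
  no further game.  Setting x true iff x^T plays at least as many valued games as x^F, each
  variable therefore accounts for at most one valued game that is not the game of a satisfied
  clause: its round-1 game or a single game of its minority literal player.\<close>

definition block_index :: "nat \<Rightarrow> nat \<Rightarrow> nat" where
  "block_index r q = (q - 1) div 2 ^ r + 1"

definition contestants :: "(player \<Rightarrow> nat) \<Rightarrow> (nat \<Rightarrow> player) \<Rightarrow> nat \<Rightarrow> nat \<Rightarrow> player set" where
  "contestants rk seat r k = {winner rk seat (r - 1) (2 * k - 1), winner rk seat (r - 1) (2 * k)}"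

definition games :: "nat \<Rightarrow> (nat \<times> nat) set" where
  "games N = (SIGMA r:{1..N}. {1..2 ^ (N - r)})"

lemma finite_games [simp]: "finite (games N)"
  by (simp add: games_def)

lemma child_block_range:
  assumes "(r, k) \<in> games N" and "j \<in> {2 * k - 1, 2 * k}"
  shows "j \<in> {1..2 ^ (N - (r - 1))}"
proof -
  have "(2::nat) ^ (N - (r - 1)) = 2 * 2 ^ (N - r)"
    using assms(1) by (simp add: games_def Suc_diff_le flip: power_Suc)
  then show ?thesis using assms by (auto simp: games_def)
qed

lemma block_index_Suc:
  assumes "block_index r q \<in> {2 * k - 1, 2 * k}" and "k \<ge> 1"
  shows "block_index (Suc r) q = k"
proof -
  have "(q - 1) div 2 ^ Suc r = (q - 1) div 2 ^ r div 2"
    unfolding power_Suc2 by (rule div_mult2_eq)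
  then show ?thesis using assms unfolding block_index_def by auto
qed

lemma le_power_if_block_index_le:
  assumes "r \<le> N" and "block_index r q \<le> 2 ^ (N - r)"
  shows "q \<le> 2 ^ N"
proof -
  have "(q - 1) div 2 ^ r < 2 ^ (N - r)" using assms(2) unfolding block_index_def by simp
  then have "q - 1 < 2 ^ (N - r) * 2 ^ r" by (simp add: div_less_iff_less_mult)
  also have "\<dots> = 2 ^ N" using assms(1) by (simp flip: power_add)
  finally show ?thesis by simp
qed

lemma winner_Suc_cases:
  "\<exists>j\<in>{2 * k - 1, 2 * k}. winner rk seat (Suc r) k = winner rk seat r j"
  by (simp add: stronger_of_def)

lemma winner_seat_in_block:
  assumes "k \<ge> 1"
  shows "\<exists>q\<ge>1. block_index r q = k \<and> winner rk seat r k = seat q"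
  using assms
proof (induction r arbitrary: k)
  case 0
  then show ?case by (auto simp: block_index_def)
next
  case (Suc r)
  obtain j where j: "j \<in> {2 * k - 1, 2 * k}" "winner rk seat (Suc r) k = winner rk seat r j"
    using winner_Suc_cases by blast
  moreover have "j \<ge> 1" using j(1) Suc.prems by auto
  ultimately obtain q where "q \<ge> 1" "block_index r q = j" "winner rk seat r j = seat q"
    using Suc.IH by blast
  then show ?case using j block_index_Suc[of r q k] Suc.prems by auto
qed

lemma winner_eq_stronger:
  assumes "r \<ge> 1" and "contestants rk seat r k = {u, v}" and "rk u < rk v"
  shows "winner rk seat r k = u"
proof -
  obtain s where "r = Suc s" using assms(1) by (cases r) auto
  then show ?thesis using assms(2,3)
    by (auto simp: contestants_def stronger_of_def doubleton_eq_iff)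
qed

lemma contestant_eq_seat:
  assumes "(r, k) \<in> games N" and "P \<in> contestants rk seat r k"
  shows "\<exists>q\<in>{1..2 ^ N}. P = seat q \<and> block_index r q = k"
proof -
  obtain s where r: "r = Suc s" using assms(1) by (cases r) (auto simp: games_def)
  obtain j where j: "j \<in> {2 * k - 1, 2 * k}" "P = winner rk seat s j"
    using assms(2) r by (auto simp: contestants_def)
  have "k \<ge> 1" "j \<ge> 1" using assms(1) j(1) by (auto simp: games_def)
  then obtain q where q: "q \<ge> 1" "block_index s q = j" "P = seat q"
    using winner_seat_in_block[of j s rk seat] j(2) by auto
  have "block_index r q = k" using block_index_Suc q(2) j(1) \<open>k \<ge> 1\<close> r by blast
  moreover have "q \<le> 2 ^ N"
    using le_power_if_block_index_le[of r N q] assms(1) \<open>block_index r q = k\<close>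
    by (auto simp: games_def)
  ultimately show ?thesis using q by auto
qed

context
  fixes seat :: "nat \<Rightarrow> player" and N :: nat
  assumes seat_inj: "inj_on seat {1..2 ^ N}"
begin

lemma block_index_winner:
  assumes "r \<le> N" and "k \<in> {1..2 ^ (N - r)}" and "q \<in> {1..2 ^ N}"
    and "winner rk seat r k = seat q"
  shows "block_index r q = k"
proof -
  obtain q' where q': "q' \<ge> 1" "block_index r q' = k" "winner rk seat r k = seat q'"
    using winner_seat_in_block[of k r rk seat] assms(2) by auto
  have "q' \<le> 2 ^ N" using le_power_if_block_index_le assms(1,2) q'(2) by auto
  then have "q' = q" using seat_inj q' assms(3,4) by (auto dest: inj_onD)
  then show ?thesis using q'(2) by simp
qed

lemma contestant_game_unique:
  assumes "(r, k) \<in> games N" and "(r, k') \<in> games N"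
    and "P \<in> contestants rk seat r k" and "P \<in> contestants rk seat r k'"
  shows "k = k'"
proof -
  obtain q q' where "q \<in> {1..2 ^ N}" "P = seat q" "block_index r q = k"
    and "q' \<in> {1..2 ^ N}" "P = seat q'" "block_index r q' = k'"
    using contestant_eq_seat assms by metis
  then show ?thesis using seat_inj by (auto dest: inj_onD)
qed

lemma winner_wins_sub_block:
  assumes "r \<le> s" and "s \<le> N" and "j \<in> {1..2 ^ (N - s)}" and "q \<in> {1..2 ^ N}"
    and "winner rk seat s j = seat q"
  shows "winner rk seat r (block_index r q) = seat q"
  using assms
proof (induction s arbitrary: j rule: dec_induct)
  case base
  then show ?case using block_index_winner by simp
next
  case (step s)
  obtain i where i: "i \<in> {2 * j - 1, 2 * j}" "winner rk seat (Suc s) j = winner rk seat s i"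
    using winner_Suc_cases by blast
  have "i \<in> {1..2 ^ (N - s)}"
    using child_block_range[of "Suc s" j N i] i(1) step.prems(1,2) by (simp add: games_def)
  then show ?case using step.IH[of i] step.prems i(2) by simp
qed

lemma contestant_round_le_if_eliminated:
  assumes "(r, k) \<in> games N" and "(r', k') \<in> games N"
    and "P \<in> contestants rk seat r k" and "P \<noteq> winner rk seat r k"
    and "P \<in> contestants rk seat r' k'"
  shows "r' \<le> r"
proof (rule ccontr)
  assume "\<not> r' \<le> r"
  obtain q where q: "q \<in> {1..2 ^ N}" "P = seat q" "block_index r q = k"
    using contestant_eq_seat assms(1,3) by metis
  obtain j where j: "j \<in> {2 * k' - 1, 2 * k'}" "P = winner rk seat (r' - 1) j"
    using assms(5) by (auto simp: contestants_def)
  have "j \<in> {1..2 ^ (N - (r' - 1))}" using child_block_range assms(2) j(1) by blast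
  then have "winner rk seat r k = P"
    using winner_wins_sub_block[of r "r' - 1" j q] \<open>\<not> r' \<le> r\<close> assms(2) q j(2) by (auto simp: games_def)
  then show False using assms(4) by simp
qed

end

definition lit_player :: "literal \<Rightarrow> player" where
  "lit_player l = (if snd l then VarT (fst l) else VarF (fst l))"

definition var_game :: "nat \<Rightarrow> nat \<Rightarrow> player set \<Rightarrow> bool" where
  "var_game x r C \<longleftrightarrow> r = 1 \<and> (C = {Var x, VarT x} \<or> C = {Var x, VarF x})"

definition clause_game ::
    "clause list \<Rightarrow> (nat \<Rightarrow> nat \<Rightarrow> nat) \<Rightarrow> nat \<Rightarrow> nat \<Rightarrow> nat \<Rightarrow> player set \<Rightarrow> bool" where
  "clause_game cls occ c p r C \<longleftrightarrow>
     c < length cls \<and> p < 2 \<and> r = occ c p \<and> C = {Cl c, lit_player (lit cls c p)}"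

definition valued_game :: "clause list \<Rightarrow> (nat \<Rightarrow> nat \<Rightarrow> nat) \<Rightarrow> nat \<Rightarrow> player set \<Rightarrow> bool" where
  "valued_game cls occ r C \<longleftrightarrow> (\<exists>x. var_game x r C) \<or> (\<exists>c p. clause_game cls occ c p r C)"

lemma game_value_eq: "game_value cls occ a b r = of_bool (valued_game cls occ r {a, b})"
proof -
  have "value_edge cls occ a b r \<or> value_edge cls occ b a r \<longleftrightarrow> valued_game cls occ r {a, b}"
    unfolding value_edge_def valued_game_def var_game_def clause_game_def lit_player_def
      doubleton_eq_iff
    by blast
  then show ?thesis by (simp add: game_value_def)
qed

lemma tournament_sum_eq_card:
  "(\<Sum>r\<in>{1..N}. \<Sum>k\<in>{1..2 ^ (N - r)}.
      game_value cls occ (winner rk seat (r - 1) (2 * k - 1)) (winner rk seat (r - 1) (2 * k)) r)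
    = card {(r, k) \<in> games N. valued_game cls occ r (contestants rk seat r k)}"
proof -
  have "(\<Sum>r\<in>{1..N}. \<Sum>k\<in>{1..2 ^ (N - r)}.
      game_value cls occ (winner rk seat (r - 1) (2 * k - 1)) (winner rk seat (r - 1) (2 * k)) r)
    = (\<Sum>(r, k)\<in>games N. of_bool (valued_game cls occ r (contestants rk seat r k)))"
    unfolding games_def contestants_def game_value_eq by (rule sum.Sigma) auto
  also have "\<dots> = card {(r, k) \<in> games N. valued_game cls occ r (contestants rk seat r k)}"
    by (simp add: split_def Int_def)
  finally show ?thesis .
qed

definition satisfied_clauses :: "clause list \<Rightarrow> (nat \<Rightarrow> bool) \<Rightarrow> nat set" where
  "satisfied_clauses cls a =
     {i. i < length cls \<and> (lit_true a (fst (cls ! i)) \<or> lit_true a (snd (cls ! i)))}"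

lemma num_satisfied_eq_card: "num_satisfied cls a = card (satisfied_clauses cls a)"
  by (simp add: num_satisfied_def satisfied_clauses_def)

lemma finite_satisfied_clauses: "finite (satisfied_clauses cls a)"
  by (simp add: satisfied_clauses_def)

lemma clause_game_occurrence:
  "clause_game cls occ c p r C \<Longrightarrow> (c, p) \<in> occurrences cls (fst (lit cls c p))"
  by (simp add: clause_game_def occurrences_def)

lemma card_UN_le_card:
  assumes "finite I" and "\<And>i. i \<in> I \<Longrightarrow> card (A i) \<le> 1"
  shows "card (\<Union>i\<in>I. A i) \<le> card I"
proof -
  have "card (\<Union>i\<in>I. A i) \<le> (\<Sum>i\<in>I. card (A i))" using assms(1) by (rule card_UN_le)
  also have "\<dots> \<le> (\<Sum>i\<in>I. 1)" using assms(2) by (rule sum_mono)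
  finally show ?thesis by simp
qed

locale reduction_seating =
  fixes n :: nat and cls :: "clause list" and occ :: "nat \<Rightarrow> nat \<Rightarrow> nat"
    and seat :: "nat \<Rightarrow> player" and N :: nat
  assumes max23: "max23_instance n cls occ"
    and seat_inj: "inj_on seat {1..2 ^ N}"
    and seat_players: "seat ` {1..2 ^ N} \<subseteq> players n (length cls)"
begin

abbreviation rk :: "player \<Rightarrow> nat" where
  "rk \<equiv> rank n (length cls)"

abbreviation players_of :: "nat \<Rightarrow> nat \<Rightarrow> player set" where
  "players_of r k \<equiv> contestants rk seat r k"

definition var_games :: "nat \<Rightarrow> (nat \<times> nat) set" where
  "var_games x = {(r, k) \<in> games N. var_game x r (players_of r k)}"

definition lit_games :: "literal \<Rightarrow> (nat \<times> nat) set" where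
  "lit_games l =
     {(r, k) \<in> games N. \<exists>c p. clause_game cls occ c p r (players_of r k) \<and> lit cls c p = l}"

definition clause_games :: "nat \<Rightarrow> (nat \<times> nat) set" where
  "clause_games c = {(r, k) \<in> games N. \<exists>p. clause_game cls occ c p r (players_of r k)}"

definition majority :: "nat \<Rightarrow> bool" where
  "majority x \<longleftrightarrow> card (lit_games (x, False)) \<le> card (lit_games (x, True))"

lemma var_games_subset: "var_games x \<subseteq> games N"
  and lit_games_subset: "lit_games l \<subseteq> games N"
  and clause_games_subset: "clause_games c \<subseteq> games N"
  by (auto simp: var_games_def lit_games_def clause_games_def)

lemma finite_var_games [simp]: "finite (var_games x)"
  by (rule finite_subset[OF var_games_subset finite_games])

lemma finite_lit_games [simp]: "finite (lit_games l)"
  by (rule finite_subset[OF lit_games_subset finite_games])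

lemma finite_clause_games [simp]: "finite (clause_games c)"
  by (rule finite_subset[OF clause_games_subset finite_games])

lemma lit_var_less: "c < length cls \<Longrightarrow> p < 2 \<Longrightarrow> fst (lit cls c p) < n"
  using max23 unfolding max23_instance_def by blast

lemma clause_game_winner:
  assumes "(r, k) \<in> games N" and "clause_game cls occ c p r (players_of r k)"
  shows "winner rk seat r k = lit_player (lit cls c p)"
proof -
  have "fst (lit cls c p) < n" using assms(2) lit_var_less unfolding clause_game_def by blast
  then have "rk (lit_player (lit cls c p)) < rk (Cl c)" by (simp add: lit_player_def)
  moreover have "players_of r k = {lit_player (lit cls c p), Cl c}"
    using assms(2) unfolding clause_game_def by auto
  moreover have "r \<ge> 1" using assms(1) by (simp add: games_def)
  ultimately show ?thesis using winner_eq_stronger by blast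
qed

lemma var_game_winner:
  assumes "var_game x r (players_of r k)"
  shows "winner rk seat r k = Var x"
proof -
  have "r = 1" using assms unfolding var_game_def by simp
  from assms consider "players_of r k = {Var x, VarT x}" | "players_of r k = {Var x, VarF x}"
    unfolding var_game_def by blast
  then show ?thesis
    using winner_eq_stronger[of r rk seat k "Var x" "VarT x"]
      winner_eq_stronger[of r rk seat k "Var x" "VarF x"] \<open>r = 1\<close>
    by cases simp_all
qed

lemma card_clause_games: "card (clause_games c) \<le> 1"
proof -
  have "(r, k) = (r', k')"
    if mem: "(r, k) \<in> clause_games c" "(r', k') \<in> clause_games c" for r k r' k'
  proof -
    obtain p p' where games: "(r, k) \<in> games N" "(r', k') \<in> games N"
      and cg: "clause_game cls occ c p r (players_of r k)"
        "clause_game cls occ c p' r' (players_of r' k')"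
      using mem unfolding clause_games_def by auto
    have played: "Cl c \<in> players_of r k" "Cl c \<in> players_of r' k'"
      using cg unfolding clause_game_def by auto
    have lost: "Cl c \<noteq> winner rk seat r k" "Cl c \<noteq> winner rk seat r' k'"
      using clause_game_winner games cg by (auto simp: lit_player_def)
    have "r' \<le> r" "r \<le> r'"
      using contestant_round_le_if_eliminated[OF seat_inj games(1,2) played(1) lost(1) played(2)]
        contestant_round_le_if_eliminated[OF seat_inj games(2,1) played(2) lost(2) played(1)] by auto
    then have "r = r'" by simp
    then show ?thesis using contestant_game_unique[OF seat_inj] games played by blast
  qed
  then show ?thesis by (auto simp: card_le_Suc0_iff_eq)
qed

lemma card_lit_games:
  assumes "x < n"
  shows "card (lit_games (x, True)) + card (lit_games (x, False)) \<le> 3"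
proof -
  let ?T = "lit_games (x, True)" and ?F = "lit_games (x, False)"
  let ?plays = "\<lambda>(r, k) (c, p). clause_game cls occ c p r (players_of r k)"
  have players: "\<exists>c. players_of r k = {Cl c, lit_player l}" if "(r, k) \<in> lit_games l" for r k l
    using that unfolding lit_games_def clause_game_def by auto
  have "?T \<inter> ?F = {}"
  proof (rule ccontr)
    assume "?T \<inter> ?F \<noteq> {}"
    then obtain r k where "(r, k) \<in> ?T" "(r, k) \<in> ?F" by auto
    then obtain c c' where "players_of r k = {Cl c, lit_player (x, True)}"
      "players_of r k = {Cl c', lit_player (x, False)}"
      using players by meson
    then show False by (simp add: doubleton_eq_iff lit_player_def)
  qed
  then have "card ?T + card ?F = card (?T \<union> ?F)" by (simp add: card_Un_disjoint)
  also have "\<dots> \<le> card (occurrences cls x)"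
  proof (rule card_le_if_inj_on_rel[where r = ?plays])
    show "finite (occurrences cls x)"
      by (rule finite_subset[of _ "{..<length cls} \<times> {..<2}"]) (auto simp: occurrences_def)
  next
    fix g assume "g \<in> ?T \<union> ?F"
    then obtain r k c p b where "g = (r, k)" "clause_game cls occ c p r (players_of r k)"
      "lit cls c p = (x, b)"
      unfolding lit_games_def by (cases g) blast
    then show "\<exists>oc. oc \<in> occurrences cls x \<and> ?plays g oc"
      using clause_game_occurrence by fastforce
  next
    fix g g' oc
    assume "g \<in> ?T \<union> ?F" "g' \<in> ?T \<union> ?F" "?plays g oc" "?plays g' oc"
    moreover obtain r k r' k' c p where "g = (r, k)" "g' = (r', k')" "oc = (c, p)"
      by (cases g, cases g', cases oc) blast
    ultimately have games: "(r, k) \<in> games N" "(r', k') \<in> games N"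
      and cg: "clause_game cls occ c p r (players_of r k)"
        "clause_game cls occ c p r' (players_of r' k')"
      using lit_games_subset by auto
    have "r = r'" "Cl c \<in> players_of r k" "Cl c \<in> players_of r' k'"
      using cg unfolding clause_game_def by auto
    then show "g = g'"
      using contestant_game_unique[OF seat_inj] games \<open>g = (r, k)\<close> \<open>g' = (r', k')\<close> by blast
  qed
  also have "\<dots> \<le> 3" using max23 assms unfolding max23_instance_def by blast
  finally show ?thesis .
qed

lemma lit_games_empty_if_var_game:
  assumes "(r, k) \<in> var_games x" and "players_of r k = {Var x, lit_player (x, b)}"
  shows "lit_games (x, b) = {}"
proof (rule ccontr)
  assume "lit_games (x, b) \<noteq> {}"
  then obtain r' k' c p where games': "(r', k') \<in> games N"
    and cg: "clause_game cls occ c p r' (players_of r' k')" and l: "lit cls c p = (x, b)"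
    unfolding lit_games_def by auto
  have games: "(r, k) \<in> games N" and vg: "var_game x r (players_of r k)"
    using assms(1) unfolding var_games_def by auto
  have lost: "lit_player (x, b) \<noteq> winner rk seat r k"
    using var_game_winner[OF vg] by (simp add: lit_player_def)
  have played: "lit_player (x, b) \<in> players_of r' k'"
    using cg l unfolding clause_game_def by auto
  have "r' \<le> r" using contestant_round_le_if_eliminated[OF seat_inj games games' _ lost played] assms(2) by simp
  moreover have "r = 1" "r' \<ge> 1" using vg games' unfolding var_game_def games_def by auto
  ultimately have "r' = r" by simp
  then have "k' = k" using contestant_game_unique[OF seat_inj] games games' played assms(2) by auto
  then have "Var x \<in> {Cl c, lit_player (lit cls c p)}"
    using cg assms(2) \<open>r' = r\<close> unfolding clause_game_def by auto
  then show False by (simp add: lit_player_def split: if_splits)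
qed

lemma card_var_games: "card (var_games x) \<le> 1"
proof -
  have "(r, k) = (r', k')"
    if mem: "(r, k) \<in> var_games x" "(r', k') \<in> var_games x" for r k r' k'
  proof -
    have games: "(r, k) \<in> games N" "(r', k') \<in> games N"
      and vg: "var_game x r (players_of r k)" "var_game x r' (players_of r' k')"
      using mem unfolding var_games_def by auto
    then have "r = r'" "Var x \<in> players_of r k" "Var x \<in> players_of r' k'"
      unfolding var_game_def by auto
    then show ?thesis using contestant_game_unique[OF seat_inj] games by blast
  qed
  then show ?thesis by (auto simp: card_le_Suc0_iff_eq)
qed

lemma card_var_games_Un_minority_lit_games:
  assumes "x < n"
  shows "card (var_games x \<union> lit_games (x, \<not> majority x)) \<le> 1"
proof (cases "var_games x = {}")
  case True
  then show ?thesis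
    using card_lit_games[OF assms]
    by (cases "card (lit_games (x, False)) \<le> card (lit_games (x, True))")
      (simp_all add: majority_def)
next
  case False
  then obtain r k where "(r, k) \<in> var_games x" by auto
  then have "players_of r k = {Var x, lit_player (x, True)} \<or>
      players_of r k = {Var x, lit_player (x, False)}"
    by (auto simp: var_games_def var_game_def lit_player_def)
  then have "lit_games (x, True) = {} \<or> lit_games (x, False) = {}"
    using lit_games_empty_if_var_game \<open>(r, k) \<in> var_games x\<close> by blast
  then have "lit_games (x, \<not> majority x) = {}"
    by (cases "lit_games (x, False) = {}") (auto simp: majority_def)
  then show ?thesis using card_var_games by simp
qed

lemma contestants_subset_players:
  assumes "(r, k) \<in> games N"
  shows "players_of r k \<subseteq> players n (length cls)"
  using contestant_eq_seat[OF assms] seat_players by blast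

lemma valued_games_subset:
  "{(r, k) \<in> games N. valued_game cls occ r (players_of r k)} \<subseteq>
     (\<Union>x<n. var_games x \<union> lit_games (x, \<not> majority x)) \<union>
     (\<Union>c\<in>satisfied_clauses cls majority. clause_games c)"
  (is "?V \<subseteq> ?U \<union> ?S")
proof
  fix g assume "g \<in> ?V"
  then obtain r k where g: "g = (r, k)" and games: "(r, k) \<in> games N"
    and "valued_game cls occ r (players_of r k)"
    by blast
  then consider x where "var_game x r (players_of r k)"
    | c p where "clause_game cls occ c p r (players_of r k)"
    unfolding valued_game_def by blast
  then show "g \<in> ?U \<union> ?S"
  proof cases
    case (1 x)
    then have "Var x \<in> players n (length cls)"
      using contestants_subset_players[OF games] unfolding var_game_def by auto
    then have "x < n" by (auto simp: players_def)
    then show ?thesis using games 1 g by (auto simp: var_games_def)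
  next
    case (2 c p)
    obtain y b where l: "lit cls c p = (y, b)" by (cases "lit cls c p")
    have "y < n" using lit_var_less 2 l unfolding clause_game_def by fastforce
    show ?thesis
    proof (cases "b = majority y")
      case True
      then have "c \<in> satisfied_clauses cls majority"
        using 2 l unfolding clause_game_def satisfied_clauses_def lit_def lit_true_def
        by (auto split: if_splits)
      then show ?thesis using games 2 g by (auto simp: clause_games_def)
    next
      case False
      then have "(r, k) \<in> lit_games (y, \<not> majority y)"
        using games 2 l unfolding lit_games_def by auto
      then show ?thesis using \<open>y < n\<close> g by blast
    qed
  qed
qed

lemma card_valued_games:
  "card {(r, k) \<in> games N. valued_game cls occ r (players_of r k)}
     \<le> n + num_satisfied cls majority"
proof -
  let ?U = "\<Union>x<n. var_games x \<union> lit_games (x, \<not> majority x)"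
    and ?S = "\<Union>c\<in>satisfied_clauses cls majority. clause_games c"
  have "?U \<union> ?S \<subseteq> games N"
    using var_games_subset lit_games_subset clause_games_subset by blast
  then have "finite (?U \<union> ?S)" using finite_games by (rule finite_subset)
  then have "card {(r, k) \<in> games N. valued_game cls occ r (players_of r k)} \<le> card (?U \<union> ?S)"
    using valued_games_subset by (rule card_mono)
  also have "\<dots> \<le> card ?U + card ?S" by (rule card_Un_le)
  also have "card ?U \<le> card {..<n}"
    using card_var_games_Un_minority_lit_games by (intro card_UN_le_card) auto
  also have "card ?S \<le> card (satisfied_clauses cls majority)"
    using card_clause_games finite_satisfied_clauses by (intro card_UN_le_card) auto
  finally show ?thesis by (simp add: num_satisfied_eq_card)
qed

lemma tournament_sum_le:
  "(\<Sum>r\<in>{1..N}. \<Sum>k\<in>{1..2 ^ (N - r)}.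
      game_value cls occ (winner rk seat (r - 1) (2 * k - 1)) (winner rk seat (r - 1) (2 * k)) r)
    \<le> n + num_satisfied cls majority"
  unfolding tournament_sum_eq_card by (rule card_valued_games)

end

theorem lemma2:
  fixes n :: nat and cls :: "clause list" and occ :: "nat \<Rightarrow> nat \<Rightarrow> nat"
    and \<sigma> :: "player \<Rightarrow> nat" and k' :: int
  assumes "max23_instance n cls occ"
    and "bij_betw \<sigma> (players n (length cls)) {1..2 ^ rounds n}"
    and "int (tournament_value n cls occ \<sigma>) \<ge> k'"
  shows "\<exists>a :: nat \<Rightarrow> bool. int (num_satisfied cls a) \<ge> k' - int n"
proof -
  define seat where "seat = inv_into (players n (length cls)) \<sigma>"
  have "bij_betw seat {1..2 ^ rounds n} (players n (length cls))"
    unfolding seat_def by (rule bij_betw_inv_into[OF assms(2)])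
  then interpret reduction_seating n cls occ seat "rounds n"
    using assms(1) by unfold_locales (auto simp: bij_betw_def)
  have "tournament_value n cls occ \<sigma> \<le> n + num_satisfied cls majority"
    using tournament_sum_le unfolding tournament_value_def Let_def seat_def .
  then show ?thesis using assms(3) by (intro exI[of _ majority]) linarith
qed

end
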